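(* Let $\mathcal{H}$ be a complex Hilbert space and let $R\in\mathbb{B}(\mathcal{H})$ be invertible (with bounded inverse). If $D(R)\le \|R^{-1}\|^{-2}$, then $\|R\|\le\sqrt{2}\,\omega(R)$.
   Context: $\mathbb{B}(\mathcal{H})$ denotes the bounded linear operators on $\mathcal{H}$. $\omega(R)=\sup\{|\langle Rx,x\rangle| : \|x\|=1\}$ is the numerical radius, $\|R\|$ the operator norm, and $D(R)=2\min(\|R_1\|^2,\|R_2\|^2)$ where $R_1=\frac{R+R^*}{2}$, $R_2=\frac{R-R^*}{2i}$. *)

theory Defs
  imports "HOL-Analysis.Analysis"
begin

text \<open>The inner product is linear in the first
  argument and conjugate-linear in the second; the norm is the one induced by it.\<close>

class complex_inner = real_normed_vector +
  fixes scaleC :: "complex \<Rightarrow> 'a \<Rightarrow> 'a" (infixr \<open>*\<^sub>C\<close> 75)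
    and cinner :: "'a \<Rightarrow> 'a \<Rightarrow> complex"
  assumes scaleC_add_right: "a *\<^sub>C (x + y) = a *\<^sub>C x + a *\<^sub>C y"
    and scaleC_add_left: "(a + b) *\<^sub>C x = a *\<^sub>C x + b *\<^sub>C x"
    and scaleC_scaleC: "a *\<^sub>C (b *\<^sub>C x) = (a * b) *\<^sub>C x"
    and scaleC_one: "1 *\<^sub>C x = x"
    and scaleR_scaleC: "scaleR r x = complex_of_real r *\<^sub>C x"
    and cinner_conj_commute: "cinner x y = cnj (cinner y x)"
    and cinner_add_left: "cinner (x + y) z = cinner x z + cinner y z"
    and cinner_scaleC_left: "cinner (a *\<^sub>C x) y = a * cinner x y"
    and cinner_self_eq_zero: "cinner x x = 0 \<longleftrightarrow> x = 0"
    and norm_eq_sqrt_cinner: "norm x = sqrt (Re (cinner x x))"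

class chilbert_space = complex_inner + complete_space

definition bounded_clinear :: "('a::complex_inner \<Rightarrow> 'b::complex_inner) \<Rightarrow> bool" where
  "bounded_clinear f \<longleftrightarrow>
     (\<forall>x y. f (x + y) = f x + f y) \<and> (\<forall>c x. f (c *\<^sub>C x) = c *\<^sub>C f x) \<and>
     (\<exists>K. \<forall>x. norm (f x) \<le> norm x * K)"

definition adjoint :: "('a::complex_inner \<Rightarrow> 'a) \<Rightarrow> ('a \<Rightarrow> 'a)" where
  "adjoint R = (SOME S. \<forall>x y. cinner (R x) y = cinner x (S y))"

definition numrad :: "('a::complex_inner \<Rightarrow> 'a) \<Rightarrow> real" where
  "numrad R = (SUP x\<in>{x. norm x = 1}. cmod (cinner (R x) x))"

definition re_part :: "('a::complex_inner \<Rightarrow> 'a) \<Rightarrow> ('a \<Rightarrow> 'a)" where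
  "re_part R = (\<lambda>x. (1/2) *\<^sub>C (R x + adjoint R x))"

definition im_part :: "('a::complex_inner \<Rightarrow> 'a) \<Rightarrow> ('a \<Rightarrow> 'a)" where
  "im_part R = (\<lambda>x. (1/(2*\<i>)) *\<^sub>C (R x - adjoint R x))"

definition Dfun :: "('a::complex_inner \<Rightarrow> 'a) \<Rightarrow> real" where
  "Dfun R = 2 * min ((onorm (re_part R))\<^sup>2) ((onorm (im_part R))\<^sup>2)"

end

theory Submission
  imports Defs
begin

text \<open>Write \<open>R = R\<^sub>1 + \<i> R\<^sub>2\<close> with \<open>R\<^sub>1, R\<^sub>2\<close> self-adjoint. A self-adjoint operator is bounded
  by its quadratic form, so \<open>\<parallel>R\<^sub>1\<parallel>, \<parallel>R\<^sub>2\<parallel> \<le> \<omega>(R)\<close>. The parallelogram law gives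
  \<open>\<parallel>Rx\<parallel>\<^sup>2 + \<parallel>R\<^sup>*x\<parallel>\<^sup>2 = 2(\<parallel>R\<^sub>1x\<parallel>\<^sup>2 + \<parallel>R\<^sub>2x\<parallel>\<^sup>2)\<close>, while \<open>\<parallel>x\<parallel> \<le> \<parallel>R\<^sup>-\<^sup>1\<parallel> \<parallel>R\<^sup>*x\<parallel>\<close> because
  \<open>\<parallel>x\<parallel>\<^sup>2 = \<langle>R R\<^sup>-\<^sup>1x, x\<rangle> = \<langle>R\<^sup>-\<^sup>1x, R\<^sup>*x\<rangle>\<close>. Under \<open>D(R) \<le> \<parallel>R\<^sup>-\<^sup>1\<parallel>\<^sup>-\<^sup>2\<close> the term \<open>\<parallel>R\<^sup>*x\<parallel>\<^sup>2\<close>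
  cancels the smaller of \<open>\<parallel>R\<^sub>1\<parallel>\<^sup>2, \<parallel>R\<^sub>2\<parallel>\<^sup>2\<close>, leaving \<open>\<parallel>Rx\<parallel>\<^sup>2 \<le> 2 \<omega>(R)\<^sup>2 \<parallel>x\<parallel>\<^sup>2\<close>.
  The adjoint exists by the Riesz representation of bounded real functionals, obtained from
  nearest points in closed subspaces.\<close>

section \<open>Complex inner product spaces\<close>

lemma scaleC_scaleR_commute: "c *\<^sub>C (r *\<^sub>R x) = r *\<^sub>R (c *\<^sub>C x)"
  by (simp only: scaleR_scaleC scaleC_scaleC mult.commute)

lemma cinner_zero_left [simp]: "cinner 0 y = 0"
  using cinner_add_left[of 0 0 y] by simp

lemma cinner_zero_right [simp]: "cinner x 0 = 0"
  using cinner_conj_commute[of x 0] by simp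

lemma cinner_add_right: "cinner x (y + z) = cinner x y + cinner x z"
  by (metis cinner_conj_commute cinner_add_left complex_cnj_add)

lemma cinner_scaleC_right: "cinner x (c *\<^sub>C y) = cnj c * cinner x y"
  by (metis cinner_conj_commute cinner_scaleC_left complex_cnj_mult)

lemma cinner_scaleR_left: "cinner (r *\<^sub>R x) y = complex_of_real r * cinner x y"
  by (simp add: scaleR_scaleC cinner_scaleC_left)

lemma cinner_scaleR_right: "cinner x (r *\<^sub>R y) = complex_of_real r * cinner x y"
  by (simp add: scaleR_scaleC cinner_scaleC_right)

lemma cinner_minus_left: "cinner (- x) y = - cinner x y"
  using cinner_scaleR_left[of "-1" x y] by simp

lemma cinner_minus_right: "cinner x (- y) = - cinner x y"
  using cinner_scaleR_right[of x "-1" y] by simp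

lemma cinner_diff_left: "cinner (x - y) z = cinner x z - cinner y z"
  using cinner_add_left[of x "- y" z] by (simp add: cinner_minus_left)

lemma cinner_diff_right: "cinner x (y - z) = cinner x y - cinner x z"
  using cinner_add_right[of x y "- z"] by (simp add: cinner_minus_right)

lemma Re_cinner_commute: "Re (cinner x y) = Re (cinner y x)"
  by (metis cinner_conj_commute cnj.sel(1))

lemma cinner_self_eq_norm_sq: "cinner x x = complex_of_real ((norm x)\<^sup>2)"
proof -
  have "Im (cinner x x) = 0"
    using arg_cong[OF cinner_conj_commute[of x x], of Im] by simp
  moreover have "(norm x)\<^sup>2 = Re (cinner x x)"
    using norm_eq_sqrt_cinner[of x] norm_ge_zero[of x] by (metis real_sqrt_ge_0_iff real_sqrt_pow2)
  ultimately show ?thesis by (simp add: complex_eq_iff)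
qed

lemma cinner_eqI: "(\<And>x. cinner x u = cinner x v) \<Longrightarrow> u = v"
  by (metis cinner_diff_right cinner_self_eq_zero right_minus_eq)

lemma norm_scaleC: "norm (c *\<^sub>C x) = cmod c * norm x"
proof -
  have "complex_of_real ((norm (c *\<^sub>C x))\<^sup>2) = c * cnj c * complex_of_real ((norm x)\<^sup>2)"
    by (simp only: flip: cinner_self_eq_norm_sq) (simp add: cinner_scaleC_left cinner_scaleC_right)
  also have "\<dots> = complex_of_real ((cmod c * norm x)\<^sup>2)"
    by (simp only: of_real_mult power_mult_distrib complex_norm_square)
  finally have "(norm (c *\<^sub>C x))\<^sup>2 = (cmod c * norm x)\<^sup>2" by (simp only: of_real_eq_iff)
  then show ?thesis by simp
qed

lemma power2_norm_add: "(norm (x + y))\<^sup>2 = (norm x)\<^sup>2 + (norm y)\<^sup>2 + 2 * Re (cinner x y)"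
proof -
  have "Re (cinner (x + y) (x + y)) = Re (cinner x x) + Re (cinner y y) + 2 * Re (cinner x y)"
    using Re_cinner_commute[of y x] by (simp add: cinner_add_left cinner_add_right)
  then show ?thesis by (simp add: cinner_self_eq_norm_sq)
qed

lemma power2_norm_diff: "(norm (x - y))\<^sup>2 = (norm x)\<^sup>2 + (norm y)\<^sup>2 - 2 * Re (cinner x y)"
  using power2_norm_add[of x "- y"] by (simp add: cinner_minus_right)

lemma parallelogram_law:
  fixes x y :: "'a::complex_inner"
  shows "(norm (x + y))\<^sup>2 + (norm (x - y))\<^sup>2 = 2 * (norm x)\<^sup>2 + 2 * (norm y)\<^sup>2"
  by (simp add: power2_norm_add power2_norm_diff)

lemma Re_cinner_cauchy_schwarz: "Re (cinner x y) \<le> norm x * norm y"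
proof (cases "x = 0 \<or> y = 0")
  case False
  then have nx: "norm x > 0" and ny: "norm y > 0" by auto
  have "0 \<le> (norm ((1 / norm x) *\<^sub>R x - (1 / norm y) *\<^sub>R y))\<^sup>2" by simp
  also have "\<dots> = 2 - 2 * (Re (cinner x y) / (norm x * norm y))"
    using nx ny by (simp add: power2_norm_diff cinner_scaleR_left cinner_scaleR_right)
  finally show ?thesis using nx ny by (simp add: pos_divide_le_eq)
qed auto

lemma cinner_cauchy_schwarz: "cmod (cinner x y) \<le> norm x * norm y"
proof -
  define c where "c = cnj (cinner x y) / cmod (cinner x y)"
  \<comment> \<open>The phase \<open>c\<close> rotates \<open>cinner x y\<close> onto the positive real axis.\<close>
  have "cnj (cinner x y) * cinner x y = complex_of_real ((cmod (cinner x y))\<^sup>2)"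
    by (metis complex_norm_square mult.commute)
  then have "cinner (c *\<^sub>C x) y = complex_of_real (cmod (cinner x y))"
    by (cases "cinner x y = 0") (simp_all add: c_def cinner_scaleC_left power2_eq_square)
  then have "cmod (cinner x y) = Re (cinner (c *\<^sub>C x) y)" by simp
  also have "\<dots> \<le> norm (c *\<^sub>C x) * norm y" by (rule Re_cinner_cauchy_schwarz)
  also have "\<dots> \<le> norm x * norm y"
    by (cases "cinner x y = 0") (simp_all add: c_def norm_scaleC norm_divide)
  finally show ?thesis .
qed

lemma bounded_linear_scaleC_right: "bounded_linear (\<lambda>x::'a::complex_inner. c *\<^sub>C x)"
  by (rule bounded_linear_intro[where K = "cmod c"])
    (simp_all add: scaleC_add_right scaleC_scaleR_commute norm_scaleC mult.commute)

lemma bounded_clinear_imp_bounded_linear: "bounded_clinear f \<Longrightarrow> bounded_linear f"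
  unfolding bounded_clinear_def by (metis bounded_linear_intro scaleR_scaleC)

section \<open>Riesz representation\<close>

lemma subspace_minimizing_sequence_Cauchy:
  fixes N :: "'a::complex_inner set"
  assumes "subspace N" and n: "\<And>k. n k \<in> N"
    and close: "\<And>k. (norm (u - n k))\<^sup>2 \<le> (infdist u N)\<^sup>2 + inverse (Suc k)"
  shows "Cauchy n"
proof (rule metric_CauchyI)
  have dist_sq: "(norm (n j - n k))\<^sup>2 \<le> 2 * inverse (Suc j) + 2 * inverse (Suc k)" for j k
  proof -
    \<comment> \<open>The midpoint of \<open>n j\<close> and \<open>n k\<close> lies in \<open>N\<close>, so it is no closer to \<open>u\<close> than \<open>infdist u N\<close>.\<close>
    have "(1/2) *\<^sub>R (n j + n k) \<in> N"
      using \<open>subspace N\<close> n by (simp add: subspace_add subspace_scale)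
    then have "infdist u N \<le> norm (u - (1/2) *\<^sub>R (n j + n k))"
      using infdist_le[of _ N u] by (simp only: dist_norm)
    then have "4 * (infdist u N)\<^sup>2 \<le> 4 * (norm (u - (1/2) *\<^sub>R (n j + n k)))\<^sup>2"
      by (simp add: power_mono infdist_nonneg)
    also have "\<dots> = (norm ((u - n j) + (u - n k)))\<^sup>2"
    proof -
      have "(u - n j) + (u - n k) = 2 *\<^sub>R (u - (1/2) *\<^sub>R (n j + n k))"
        by (simp add: algebra_simps scaleR_2)
      then show ?thesis by (simp add: power2_eq_square)
    qed
    finally have "4 * (infdist u N)\<^sup>2 \<le> (norm ((u - n j) + (u - n k)))\<^sup>2" .
    moreover have "(norm ((u - n j) - (u - n k)))\<^sup>2 = (norm (n j - n k))\<^sup>2"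
      by (simp add: norm_minus_commute)
    ultimately show ?thesis
      using parallelogram_law[of "u - n j" "u - n k"] close[of j] close[of k] by linarith
  qed
  fix e :: real
  assume "e > 0"
  then obtain M :: nat where M: "inverse (Suc M) < e\<^sup>2 / 4"
    using reals_Archimedean[of "e\<^sup>2 / 4"] by auto
  have "dist (n j) (n k) < e" if "j \<ge> M" "k \<ge> M" for j k
  proof -
    have "inverse (Suc j) \<le> inverse (Suc M)" "inverse (Suc k) \<le> inverse (Suc M)"
      using that by (simp_all add: le_imp_inverse_le)
    then have "(norm (n j - n k))\<^sup>2 < e\<^sup>2" using dist_sq[of j k] M by linarith
    then show ?thesis using \<open>e > 0\<close> by (simp add: dist_norm power_less_imp_less_base)
  qed
  then show "\<exists>M. \<forall>j\<ge>M. \<forall>k\<ge>M. dist (n j) (n k) < e" by blast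
qed

lemma closed_subspace_nearest_point:
  fixes N :: "'a::chilbert_space set"
  assumes "subspace N" "closed N"
  obtains p where "p \<in> N" "\<And>m. m \<in> N \<Longrightarrow> norm (u - p) \<le> norm (u - m)"
proof -
  let ?d = "infdist u N"
  have "\<exists>m. m \<in> N \<and> norm (u - m) < sqrt (?d\<^sup>2 + inverse (Suc k))" for k
  proof -
    have "?d < sqrt (?d\<^sup>2 + inverse (Suc k))"
      using infdist_nonneg[of u N] real_sqrt_less_mono[of "?d\<^sup>2" "?d\<^sup>2 + inverse (Suc k)"] by simp
    moreover have "N \<noteq> {}" using \<open>subspace N\<close> subspace_0 by blast
    ultimately have "\<exists>m\<in>N. dist u m < sqrt (?d\<^sup>2 + inverse (Suc k))"
      by (simp add: infdist_notempty cINF_less_iff)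
    then show ?thesis by (auto simp: dist_norm)
  qed
  then obtain n where n: "\<And>k. n k \<in> N"
    and close: "\<And>k. norm (u - n k) < sqrt (?d\<^sup>2 + inverse (Suc k))"
    using choice[where Q = "\<lambda>k m. m \<in> N \<and> norm (u - m) < sqrt (?d\<^sup>2 + inverse (Suc k))"] by blast
  have "(norm (u - n k))\<^sup>2 \<le> ?d\<^sup>2 + inverse (Suc k)" for k
  proof -
    have "(norm (u - n k))\<^sup>2 \<le> (sqrt (?d\<^sup>2 + inverse (Suc k)))\<^sup>2"
      using close[of k] by (intro power_mono) auto
    then show ?thesis by simp
  qed
  then have "Cauchy n" using subspace_minimizing_sequence_Cauchy[of N n u] \<open>subspace N\<close> n by blast
  then obtain p where lim: "n \<longlonglongrightarrow> p" using Cauchy_convergent_iff convergent_def by blast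
  have "p \<in> N" by (rule closed_sequentially[OF \<open>closed N\<close> n lim])
  have "(\<lambda>k. norm (u - n k)) \<longlonglongrightarrow> norm (u - p)" by (intro tendsto_intros lim)
  moreover have "(\<lambda>k. sqrt (?d\<^sup>2 + inverse (Suc k))) \<longlonglongrightarrow> sqrt (?d\<^sup>2 + 0)"
    by (intro tendsto_intros LIMSEQ_inverse_real_of_nat)
  ultimately have "norm (u - p) \<le> sqrt (?d\<^sup>2 + 0)"
    by (rule LIMSEQ_le) (use close less_imp_le in blast)
  then have "norm (u - p) \<le> ?d" using infdist_nonneg[of u N] by simp
  show ?thesis
  proof (rule that[OF \<open>p \<in> N\<close>])
    fix m
    assume "m \<in> N"
    then have "?d \<le> dist u m" by (rule infdist_le)
    then have "?d \<le> norm (u - m)" by (simp only: dist_norm)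
    with \<open>norm (u - p) \<le> ?d\<close> show "norm (u - p) \<le> norm (u - m)" by linarith
  qed
qed

lemma nearest_point_orthogonal:
  fixes N :: "'a::complex_inner set"
  assumes "subspace N" "p \<in> N" "m \<in> N" and nearest: "\<And>m. m \<in> N \<Longrightarrow> norm (u - p) \<le> norm (u - m)"
  shows "Re (cinner (u - p) m) = 0"
proof (cases "m = 0")
  case False
  define v t where "v = u - p" and "t = Re (cinner v m) / (norm m)\<^sup>2"
  have "p + t *\<^sub>R m \<in> N" using assms by (simp add: subspace_add subspace_scale)
  moreover have "u - (p + t *\<^sub>R m) = v - t *\<^sub>R m" by (simp add: v_def)
  ultimately have "norm v \<le> norm (v - t *\<^sub>R m)" using nearest v_def by metis
  then have "(norm v)\<^sup>2 \<le> (norm (v - t *\<^sub>R m))\<^sup>2" by (simp add: power_mono)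
  also have "\<dots> = (norm v)\<^sup>2 - 2 * t * Re (cinner v m) + t\<^sup>2 * (norm m)\<^sup>2"
    by (simp add: power2_norm_diff cinner_scaleR_right power_mult_distrib)
  also have "\<dots> = (norm v)\<^sup>2 - (Re (cinner v m))\<^sup>2 / (norm m)\<^sup>2"
    using False by (simp add: t_def field_simps power2_eq_square)
  finally have "(Re (cinner v m))\<^sup>2 / (norm m)\<^sup>2 \<le> 0" by simp
  then show ?thesis using False by (simp add: v_def divide_le_0_iff)
qed simp

lemma Re_cinner_representation:
  fixes f :: "'a::chilbert_space \<Rightarrow> real"
  assumes "bounded_linear f"
  obtains z where "\<And>x. f x = Re (cinner x z)"
proof (cases "\<forall>x. f x = 0")
  case True then show ?thesis using that[of 0] by simp
next
  case False
  interpret f: bounded_linear f by fact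
  from False obtain u where "f u \<noteq> 0" by auto
  let ?N = "{x. f x = 0}"
  have "subspace ?N" by (simp add: subspace_def f.add f.scale)
  moreover have "closed ?N" by (intro closed_Collect_eq continuous_on_const linear_continuous_on assms)
  ultimately obtain p where "p \<in> ?N" and nearest: "\<And>m. m \<in> ?N \<Longrightarrow> norm (u - p) \<le> norm (u - m)"
    using closed_subspace_nearest_point by blast
  define v where "v = u - p"
  have "f v \<noteq> 0" using \<open>p \<in> ?N\<close> \<open>f u \<noteq> 0\<close> by (simp add: v_def f.diff)
  then have "v \<noteq> 0" using f.zero by auto
  \<comment> \<open>\<open>v\<close> is orthogonal to the kernel, and \<open>x - (f x / f v) v\<close> lies in the kernel.\<close>
  have repr: "Re (cinner x v) = (f x / f v) * (norm v)\<^sup>2" for x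
  proof -
    have "x - (f x / f v) *\<^sub>R v \<in> ?N" using \<open>f v \<noteq> 0\<close> by (simp add: f.diff f.scale)
    then have "Re (cinner v (x - (f x / f v) *\<^sub>R v)) = 0"
      unfolding v_def by (rule nearest_point_orthogonal[OF \<open>subspace ?N\<close> \<open>p \<in> ?N\<close> _ nearest])
    then show ?thesis
      by (simp add: cinner_diff_right cinner_scaleR_right cinner_self_eq_norm_sq Re_cinner_commute[of v x])
  qed
  show ?thesis
  proof (rule that)
    fix x
    have "Re (cinner x ((f v / (norm v)\<^sup>2) *\<^sub>R v)) = f v / (norm v)\<^sup>2 * Re (cinner x v)"
      by (simp add: cinner_scaleR_right)
    also have "\<dots> = f x" unfolding repr using \<open>v \<noteq> 0\<close> \<open>f v \<noteq> 0\<close> by simp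
    finally show "f x = Re (cinner x ((f v / (norm v)\<^sup>2) *\<^sub>R v))" ..
  qed
qed

section \<open>Adjoint, real and imaginary parts\<close>

lemma cinner_adjoint:
  fixes R :: "'a::chilbert_space \<Rightarrow> 'a"
  assumes "bounded_clinear R"
  shows "cinner (R x) y = cinner x (adjoint R y)"
proof -
  interpret R: bounded_linear R by (rule bounded_clinear_imp_bounded_linear[OF assms])
  have R_scaleC: "R (c *\<^sub>C x) = c *\<^sub>C R x" for c x
    using assms unfolding bounded_clinear_def by blast
  obtain K where K: "\<And>x. norm (R x) \<le> norm x * K" using R.bounded by blast
  have "\<exists>z. \<forall>x. Re (cinner (R x) y) = Re (cinner x z)" for y
  proof -
    have "bounded_linear (\<lambda>x. Re (cinner (R x) y))"
    proof (rule bounded_linear_intro[where K = "K * norm y"])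
      show "Re (cinner (R (x + x')) y) = Re (cinner (R x) y) + Re (cinner (R x') y)" for x x'
        by (simp add: R.add cinner_add_left)
      show "Re (cinner (R (r *\<^sub>R x)) y) = r *\<^sub>R Re (cinner (R x) y)" for r x
        by (simp add: R.scale cinner_scaleR_left)
      show "norm (Re (cinner (R x) y)) \<le> norm x * (K * norm y)" for x
      proof -
        have "norm (Re (cinner (R x) y)) \<le> cmod (cinner (R x) y)" by (simp add: abs_Re_le_cmod)
        also have "\<dots> \<le> norm (R x) * norm y" by (rule cinner_cauchy_schwarz)
        also have "\<dots> \<le> norm x * K * norm y" using K[of x] by (simp add: mult_right_mono)
        finally show ?thesis by (simp add: mult.assoc)
      qed
    qed
    then show ?thesis by (rule Re_cinner_representation) blast
  qed
  then obtain S where S: "\<And>x y. Re (cinner (R x) y) = Re (cinner x (S y))" by metis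
  \<comment> \<open>Imaginary parts are real parts of the inner products with \<open>\<i> x\<close>.\<close>
  have "cinner (R x) y = cinner x (S y)" for x y
  proof (rule complex_eqI)
    show "Re (cinner (R x) y) = Re (cinner x (S y))" by (rule S)
    show "Im (cinner (R x) y) = Im (cinner x (S y))"
      using S[of "\<i> *\<^sub>C x" y] by (simp add: R_scaleC cinner_scaleC_left)
  qed
  then have "\<forall>x y. cinner (R x) y = cinner x (adjoint R y)"
    unfolding adjoint_def by (rule someI[where x = S, OF allI, OF allI])
  then show ?thesis by blast
qed

lemma cinner_adjoint_left:
  fixes R :: "'a::chilbert_space \<Rightarrow> 'a"
  assumes "bounded_clinear R"
  shows "cinner (adjoint R x) y = cinner x (R y)"
  by (metis assms cinner_adjoint cinner_conj_commute)

lemma bounded_linear_adjoint: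
  fixes R :: "'a::chilbert_space \<Rightarrow> 'a"
  assumes "bounded_clinear R"
  shows "bounded_linear (adjoint R)"
proof -
  interpret R: bounded_linear R by (rule bounded_clinear_imp_bounded_linear[OF assms])
  obtain K where "K > 0" and K: "\<And>x. norm (R x) \<le> norm x * K" using R.pos_bounded by blast
  show ?thesis
  proof (rule bounded_linear_intro[where K = K])
    show "adjoint R (x + y) = adjoint R x + adjoint R y" for x y
      by (rule cinner_eqI) (simp add: cinner_add_right flip: cinner_adjoint[OF assms])
    show "adjoint R (r *\<^sub>R x) = r *\<^sub>R adjoint R x" for r x
      by (rule cinner_eqI) (simp add: cinner_scaleR_right flip: cinner_adjoint[OF assms])
    show "norm (adjoint R y) \<le> norm y * K" for y
    proof -
      have "(norm (adjoint R y))\<^sup>2 = Re (cinner (R (adjoint R y)) y)"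
        by (simp add: cinner_adjoint[OF assms] cinner_self_eq_norm_sq)
      also have "\<dots> \<le> norm (R (adjoint R y)) * norm y" by (rule Re_cinner_cauchy_schwarz)
      also have "\<dots> \<le> norm (adjoint R y) * K * norm y" using K by (simp add: mult_right_mono)
      finally have "norm (adjoint R y) * norm (adjoint R y) \<le> norm (adjoint R y) * (norm y * K)"
        by (simp add: power2_eq_square mult_ac)
      then show ?thesis using \<open>K > 0\<close> by (cases "adjoint R y = 0") auto
    qed
  qed
qed

lemma bounded_linear_re_part:
  fixes R :: "'a::chilbert_space \<Rightarrow> 'a"
  assumes "bounded_clinear R"
  shows "bounded_linear (re_part R)"
  unfolding re_part_def
  by (intro bounded_linear_compose[OF bounded_linear_scaleC_right] bounded_linear_add
      bounded_clinear_imp_bounded_linear bounded_linear_adjoint assms)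

lemma bounded_linear_im_part:
  fixes R :: "'a::chilbert_space \<Rightarrow> 'a"
  assumes "bounded_clinear R"
  shows "bounded_linear (im_part R)"
  unfolding im_part_def
  by (intro bounded_linear_compose[OF bounded_linear_scaleC_right] bounded_linear_sub
      bounded_clinear_imp_bounded_linear bounded_linear_adjoint assms)

lemma cinner_re_part_selfadjoint:
  fixes R :: "'a::chilbert_space \<Rightarrow> 'a"
  assumes "bounded_clinear R"
  shows "cinner (re_part R x) y = cinner x (re_part R y)"
  by (simp add: re_part_def cinner_scaleC_left cinner_scaleC_right cinner_add_left cinner_add_right
      cinner_adjoint[OF assms] cinner_adjoint_left[OF assms] add.commute)

lemma cinner_im_part_selfadjoint:
  fixes R :: "'a::chilbert_space \<Rightarrow> 'a"
  assumes "bounded_clinear R"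
  shows "cinner (im_part R x) y = cinner x (im_part R y)"
  by (simp add: im_part_def cinner_scaleC_left cinner_scaleC_right cinner_diff_left cinner_diff_right
      cinner_adjoint[OF assms] cinner_adjoint_left[OF assms] field_simps)

lemma Re_cinner_re_part:
  fixes R :: "'a::chilbert_space \<Rightarrow> 'a"
  assumes "bounded_clinear R"
  shows "Re (cinner (re_part R x) x) = Re (cinner (R x) x)"
  using cinner_conj_commute[of x "R x"]
  by (simp add: re_part_def cinner_scaleC_left cinner_add_left cinner_adjoint_left[OF assms])

lemma Re_cinner_im_part:
  fixes R :: "'a::chilbert_space \<Rightarrow> 'a"
  assumes "bounded_clinear R"
  shows "Re (cinner (im_part R x) x) = Im (cinner (R x) x)"
  using cinner_conj_commute[of x "R x"]
  by (simp add: im_part_def cinner_scaleC_left cinner_diff_left cinner_adjoint_left[OF assms]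
      complex_diff_cnj)

lemma power2_norm_apply_add_adjoint:
  "(norm (R x))\<^sup>2 + (norm (adjoint R x))\<^sup>2 = 2 * ((norm (re_part R x))\<^sup>2 + (norm (im_part R x))\<^sup>2)"
  using parallelogram_law[of "R x" "adjoint R x"]
  by (simp add: re_part_def im_part_def norm_scaleC norm_divide norm_mult power_divide)


section \<open>Numerical radius\<close>

lemma norm_selfadjoint_le:
  fixes H :: "'a::complex_inner \<Rightarrow> 'a"
  assumes "bounded_linear H" and selfadjoint: "\<And>x y. cinner (H x) y = cinner x (H y)"
    and bound: "\<And>x. \<bar>Re (cinner (H x) x)\<bar> \<le> W * (norm x)\<^sup>2"
  shows "norm (H x) \<le> W * norm x"
proof -
  interpret H: bounded_linear H by fact
  have swap: "Re (cinner (H y) x) = Re (cinner (H x) y)" for x y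
    by (metis selfadjoint Re_cinner_commute)
  \<comment> \<open>Polarization expresses \<open>Re \<langle>H x, y\<rangle>\<close> through the quadratic form, then the parallelogram law bounds it.\<close>
  have polar: "Re (cinner (H x) y) \<le> W * ((norm x)\<^sup>2 + (norm y)\<^sup>2) / 2" for x y
  proof -
    have "4 * Re (cinner (H x) y) = Re (cinner (H (x + y)) (x + y)) - Re (cinner (H (x - y)) (x - y))"
      using swap[of x y]
      by (simp add: H.add H.diff cinner_add_left cinner_add_right cinner_diff_left cinner_diff_right)
    also have "\<dots> \<le> W * (norm (x + y))\<^sup>2 + W * (norm (x - y))\<^sup>2"
      using bound[of "x + y"] bound[of "x - y"] by (simp add: abs_le_iff)
    also have "\<dots> = W * ((norm (x + y))\<^sup>2 + (norm (x - y))\<^sup>2)" by (simp add: distrib_left)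
    also have "\<dots> = 2 * W * ((norm x)\<^sup>2 + (norm y)\<^sup>2)" by (simp only: parallelogram_law) (simp add: algebra_simps)
    finally show ?thesis by simp
  qed
  show ?thesis
  proof (cases "H x = 0")
    case True
    show ?thesis
    proof (cases "x = 0")
      case False
      then show ?thesis using True bound[of x] by (simp add: zero_le_mult_iff)
    qed (simp add: True)
  next
    case False
    define y where "y = (norm x / norm (H x)) *\<^sub>R H x"
    have "norm x * norm (H x) = Re (cinner (H x) y)"
      using False by (simp add: y_def cinner_scaleR_right cinner_self_eq_norm_sq power2_eq_square)
    also have "\<dots> \<le> norm x * (W * norm x)"
      using polar[of x y] False by (simp add: y_def power2_eq_square mult_ac)
    finally show ?thesis using False by (cases "x = 0") (simp_all add: H.zero)
  qed
qed

lemma cmod_cinner_le_numrad: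
  fixes R :: "'a::complex_inner \<Rightarrow> 'a"
  assumes "bounded_linear R" "norm x = 1"
  shows "cmod (cinner (R x) x) \<le> numrad R"
proof -
  interpret R: bounded_linear R by fact
  obtain K where K: "\<And>x. norm (R x) \<le> norm x * K" using R.bounded by blast
  have "cmod (cinner (R x) x) \<le> K" if "norm x = 1" for x
    using cinner_cauchy_schwarz[of "R x" x] K[of x] that by simp
  then have "bdd_above ((\<lambda>x. cmod (cinner (R x) x)) ` {x. norm x = 1})"
    by (auto simp: bdd_above_def)
  then show ?thesis unfolding numrad_def using assms(2) by (intro cSUP_upper) auto
qed

lemma cmod_cinner_le_numrad_mult:
  fixes R :: "'a::complex_inner \<Rightarrow> 'a"
  assumes "bounded_linear R"
  shows "cmod (cinner (R x) x) \<le> numrad R * (norm x)\<^sup>2"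
proof -
  interpret R: bounded_linear R by fact
  show ?thesis
  proof (cases "x = 0")
    case False
    have "cmod (cinner (R ((1 / norm x) *\<^sub>R x)) ((1 / norm x) *\<^sub>R x))
        = cmod (cinner (R x) x) / (norm x)\<^sup>2"
      by (simp add: R.scale cinner_scaleR_left cinner_scaleR_right norm_divide norm_mult power2_eq_square)
    moreover have "cmod (cinner (R ((1 / norm x) *\<^sub>R x)) ((1 / norm x) *\<^sub>R x)) \<le> numrad R"
      using False by (intro cmod_cinner_le_numrad assms) simp
    ultimately show ?thesis using False by (simp add: pos_divide_le_eq)
  qed (simp add: R.zero)
qed

lemma numrad_nonneg:
  fixes R :: "'a::complex_inner \<Rightarrow> 'a"
  assumes "bounded_linear R" "\<exists>x::'a. x \<noteq> 0"
  shows "0 \<le> numrad R"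
proof -
  obtain x :: 'a where "x \<noteq> 0" using assms(2) by blast
  then have "norm ((1 / norm x) *\<^sub>R x) = 1" by simp
  then show ?thesis by (meson cmod_cinner_le_numrad[OF assms(1)] norm_ge_zero order_trans)
qed

lemma onorm_re_part_le_numrad:
  fixes R :: "'a::chilbert_space \<Rightarrow> 'a"
  assumes "bounded_clinear R" "\<exists>x::'a. x \<noteq> 0"
  shows "onorm (re_part R) \<le> numrad R"
proof (rule onorm_bound)
  have R: "bounded_linear R" by (rule bounded_clinear_imp_bounded_linear[OF assms(1)])
  show "0 \<le> numrad R" by (rule numrad_nonneg[OF R assms(2)])
  show "norm (re_part R x) \<le> numrad R * norm x" for x
  proof (rule norm_selfadjoint_le[OF bounded_linear_re_part[OF assms(1)]])
    show "cinner (re_part R x) y = cinner x (re_part R y)" for x y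
      by (rule cinner_re_part_selfadjoint[OF assms(1)])
    show "\<bar>Re (cinner (re_part R x) x)\<bar> \<le> numrad R * (norm x)\<^sup>2" for x
      using abs_Re_le_cmod[of "cinner (R x) x"] cmod_cinner_le_numrad_mult[OF R, of x]
      by (simp add: Re_cinner_re_part[OF assms(1)])
  qed
qed

lemma onorm_im_part_le_numrad:
  fixes R :: "'a::chilbert_space \<Rightarrow> 'a"
  assumes "bounded_clinear R" "\<exists>x::'a. x \<noteq> 0"
  shows "onorm (im_part R) \<le> numrad R"
proof (rule onorm_bound)
  have R: "bounded_linear R" by (rule bounded_clinear_imp_bounded_linear[OF assms(1)])
  show "0 \<le> numrad R" by (rule numrad_nonneg[OF R assms(2)])
  show "norm (im_part R x) \<le> numrad R * norm x" for x
  proof (rule norm_selfadjoint_le[OF bounded_linear_im_part[OF assms(1)]])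
    show "cinner (im_part R x) y = cinner x (im_part R y)" for x y
      by (rule cinner_im_part_selfadjoint[OF assms(1)])
    show "\<bar>Re (cinner (im_part R x) x)\<bar> \<le> numrad R * (norm x)\<^sup>2" for x
      using abs_Im_le_cmod[of "cinner (R x) x"] cmod_cinner_le_numrad_mult[OF R, of x]
      by (simp add: Re_cinner_im_part[OF assms(1)])
  qed
qed

lemma norm_le_onorm_right_inverse_mult_adjoint:
  fixes R L :: "'a::chilbert_space \<Rightarrow> 'a"
  assumes "bounded_clinear R" "bounded_linear L" and right_inverse: "\<And>x. R (L x) = x"
  shows "norm x \<le> onorm L * norm (adjoint R x)"
proof -
  have "(norm x)\<^sup>2 = Re (cinner (L x) (adjoint R x))"
    by (simp add: right_inverse cinner_self_eq_norm_sq flip: cinner_adjoint[OF assms(1)])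
  also have "\<dots> \<le> norm (L x) * norm (adjoint R x)" by (rule Re_cinner_cauchy_schwarz)
  also have "\<dots> \<le> onorm L * norm x * norm (adjoint R x)"
    by (intro mult_right_mono onorm[OF assms(2)]) simp
  finally have "norm x * norm x \<le> norm x * (onorm L * norm (adjoint R x))"
    by (simp add: power2_eq_square mult_ac)
  then show ?thesis
    using onorm_pos_le[OF assms(2)] by (cases "x = 0") auto
qed

lemma norm_apply_le_sqrt2_max_onorm_parts:
  fixes R :: "'a::chilbert_space \<Rightarrow> 'a"
  assumes "bounded_clinear R"
    and adjoint_lower: "2 * min ((onorm (re_part R))\<^sup>2) ((onorm (im_part R))\<^sup>2) * (norm x)\<^sup>2
      \<le> (norm (adjoint R x))\<^sup>2"
  shows "norm (R x) \<le> sqrt 2 * max (onorm (re_part R)) (onorm (im_part R)) * norm x"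
proof -
  define a b where "a = onorm (re_part R)" and "b = onorm (im_part R)"
  have "a \<ge> 0" "b \<ge> 0"
    unfolding a_def b_def using onorm_pos_le bounded_linear_re_part bounded_linear_im_part assms(1)
    by blast+
  \<comment> \<open>The lower bound on \<open>R\<^sup>* x\<close> cancels the smaller of the two parts.\<close>
  have max_eq: "a\<^sup>2 + b\<^sup>2 - min (a\<^sup>2) (b\<^sup>2) = (max a b)\<^sup>2"
    using \<open>a \<ge> 0\<close> \<open>b \<ge> 0\<close> by (cases "a \<le> b") (simp_all add: max_def min_def power_mono)
  have "(norm (re_part R x))\<^sup>2 \<le> (a * norm x)\<^sup>2"
    unfolding a_def by (intro power_mono onorm bounded_linear_re_part assms(1)) simp
  moreover have "(norm (im_part R x))\<^sup>2 \<le> (b * norm x)\<^sup>2"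
    unfolding b_def by (intro power_mono onorm bounded_linear_im_part assms(1)) simp
  ultimately have "(norm (R x))\<^sup>2 \<le> 2 * ((a * norm x)\<^sup>2 + (b * norm x)\<^sup>2) - (norm (adjoint R x))\<^sup>2"
    using power2_norm_apply_add_adjoint[of R x] by (smt (verit))
  also have "\<dots> \<le> 2 * (a\<^sup>2 + b\<^sup>2 - min (a\<^sup>2) (b\<^sup>2)) * (norm x)\<^sup>2"
    using adjoint_lower by (simp add: a_def b_def power_mult_distrib algebra_simps)
  also have "\<dots> = (sqrt 2 * max a b * norm x)\<^sup>2" by (simp add: max_eq power_mult_distrib)
  finally have "norm (R x) \<le> sqrt 2 * max a b * norm x"
    by (rule power2_le_imp_le) (simp add: \<open>a \<ge> 0\<close> le_max_iff_disj)
  then show ?thesis by (simp only: a_def b_def)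
qed

lemma Dfun_bound_imp_adjoint_lower:
  fixes R :: "'a::chilbert_space \<Rightarrow> 'a"
  assumes "bounded_clinear R" "bij R" "bounded_clinear (inv R)"
    and "Dfun R \<le> 1 / (onorm (inv R))\<^sup>2"
  shows "2 * min ((onorm (re_part R))\<^sup>2) ((onorm (im_part R))\<^sup>2) * (norm x)\<^sup>2
    \<le> (norm (adjoint R x))\<^sup>2"
proof -
  let ?c = "2 * min ((onorm (re_part R))\<^sup>2) ((onorm (im_part R))\<^sup>2)" and ?m = "onorm (inv R)"
  have adjoint_ge: "norm x \<le> ?m * norm (adjoint R x)"
    using norm_le_onorm_right_inverse_mult_adjoint[OF assms(1)
        bounded_clinear_imp_bounded_linear[OF assms(3)]] assms(2)
    by (simp add: bij_is_surj surj_f_inv_f)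
  show ?thesis
  proof (cases "?m = 0")
    case True
    then show ?thesis using adjoint_ge by simp
  next
    case False
    have "?c * (norm x)\<^sup>2 \<le> ?c * (?m * norm (adjoint R x))\<^sup>2"
      using adjoint_ge by (intro mult_left_mono power_mono) auto
    also have "\<dots> = (?c * ?m\<^sup>2) * (norm (adjoint R x))\<^sup>2" by (simp add: power_mult_distrib)
    also have "\<dots> \<le> (norm (adjoint R x))\<^sup>2"
      using assms(4) False by (intro mult_left_le_one_le) (auto simp: Dfun_def field_simps)
    finally show ?thesis .
  qed
qed

theorem corollary2p3:
  fixes R :: "'a::chilbert_space \<Rightarrow> 'a"
  assumes nontriv: "\<exists>x::'a. x \<noteq> 0"
    and bdd: "bounded_clinear R"
    and invertible: "bij R"
    and inv_bdd: "bounded_clinear (inv R)"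
    and hD: "Dfun R \<le> 1 / (onorm (inv R))\<^sup>2"
  shows "onorm R \<le> sqrt 2 * numrad R"
proof -
  let ?a = "onorm (re_part R)" and ?b = "onorm (im_part R)"
  have apply_le: "norm (R x) \<le> sqrt 2 * max ?a ?b * norm x" for x
    using Dfun_bound_imp_adjoint_lower[OF bdd invertible inv_bdd hD]
    by (rule norm_apply_le_sqrt2_max_onorm_parts[OF bdd])
  have "max ?a ?b \<le> numrad R"
    using onorm_re_part_le_numrad[OF bdd nontriv] onorm_im_part_le_numrad[OF bdd nontriv] by simp
  then have "sqrt 2 * max ?a ?b * norm x \<le> sqrt 2 * numrad R * norm x" for x
    by (intro mult_right_mono mult_left_mono) simp_all
  then have "norm (R x) \<le> sqrt 2 * numrad R * norm x" for x
    by (rule order_trans[OF apply_le])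
  then show ?thesis
    using numrad_nonneg[OF bounded_clinear_imp_bounded_linear[OF bdd] nontriv] by (intro onorm_bound) auto
qed

end
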